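(* Let $\mathrm{Bool}_t$ assign to each finite set $X$ a subset $\mathrm{Bool}_t(X)\subseteq\mathrm{Bool}(X)$, stable under bijections ($f\circ\sigma^{-1}\in\mathrm{Bool}_t(X')$ for $f\in\mathrm{Bool}_t(X)$, $\sigma:X\to X'$ bijective), with $1\in\mathrm{Bool}_t(\emptyset)$, closed under $\star_1$ and under restrictions. Let $\mathcal{E}$ assign to each $f\in\mathrm{Bool}_t(X)$ a set $\mathcal{E}(f)$ of equivalence relations on $X$, compatible with bijections ($\mathcal{E}(f\circ\sigma^{-1})$ is the image of $\mathcal{E}(f)$ under transport by $\sigma$), such that $f/{\sim}\in\mathrm{Bool}_t(X/{\sim})$ for all $\sim\in\mathcal{E}(f)$. Assume: ($\star_1$) $\mathcal{E}(1)$ contains the equivalence on $\emptyset$, and $\mathcal{E}(f\star_1g)=\{\sim_X\sqcup\sim_Y\mid\sim_X\in\mathcal{E}(f),\ \sim_Y\in\mathcal{E}(g)\}$ for disjoint $X,Y$, $f\in\mathrm{Bool}_t(X)$, $g\in\mathrm{Bool}_t(Y)$; ($\delta$) for $f\in\mathrm{Bool}_t(X)$ and $\sim\subseteq\sim'$: ($\sim\in\mathcal{E}(f)$ and $\overline{\sim'}\in\mathcal{E}(f/{\sim})$) iff ($\sim'\in\mathcal{E}(f)$ and $\sim\in\mathcal{E}(f\mid\sim')$); ($\Delta$) for disjoint $X,Y$, $f\in\mathrm{Bool}_t(X\sqcup Y)$ and equivalences $\sim_X,\sim_Y$ on $X,Y$: $\sim_X\sqcup\sim_Y\in\mathcal{E}(f)$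 iff $\sim_X\in\mathcal{E}(f_{\mid X})$ and $\sim_Y\in\mathcal{E}(f_{\mid Y})$; ($\epsilon$) for $f\in\mathrm{Bool}_t(X)$: $=_X$ and $\sim_f^i$ belong to $\mathcal{E}(f)$; for $\sim\in\mathcal{E}(f)$, $f\mid\sim$ is modular iff $\sim$ is $=_X$; and $f/{\sim}$ is modular iff $\sim=\sim_f^i$. Then $\mathcal{E}(f)=\mathcal{E}^S(f)=\mathcal{E}^W(f)$ for every finite set $X$ and every $f\in\mathrm{Bool}_t(X)$.
   Context: A boolean function on a finite set $X$ is a map $f:\mathcal{P}(X)\to\mathbb{Z}$ with $f(\emptyset)=0$; $\mathrm{Bool}(X)$ is their set; $f_{\mid Y}$ is the restriction to $\mathcal{P}(Y)$. For disjoint $X,Y$, $(f\star_1g)(A)=f(A\cap X)+g(A\cap Y)$ (associative, commutative, unit $1\in\mathrm{Bool}(\emptyset)$). For nonempty $X$, $f$ is indecomposable if $f=f'\star_1f''$ with $f'\in\mathrm{Bool}(X\setminus Y)$, $f''\in\mathrm{Bool}(Y)$ forces $Y\in\{\emptyset,X\}$. Each $f$ determines a unique equivalence $\sim_f^i$ with $f=\prod^{\star_1}_{Y\in X/\sim_f^i}f_{\mid Y}$ and each $f_{\mid Y}$ indecomposable; $\mathrm{ic}(f)=|X/\sim_f^i|$. $f$ is modular if $f(A)=\sum_{x\in A}f(\{x\})$ for all $A$. For an equivalence $\sim$ on $X$: $\mathrm{cl}(\sim)=|X/{\sim}|$, $\varpi_\sim$ the canonical surjection, $f/{\sim}(A)=f(\varpi_\sim^{-1}(A))$,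 $(f\mid\sim)(A)=\sum_{Y\in X/\sim}f(A\cap Y)$. If $\sim\subseteq\sim'$, $\overline{\sim'}$ is the equivalence on $X/{\sim}$ with $\varpi_\sim(x)\,\overline{\sim'}\,\varpi_\sim(y)\iff x\sim'y$. $=_X$ is the equality relation. $\mathcal{E}^W(f)=\{\sim:\mathrm{ic}(f\mid\sim)=\mathrm{cl}(\sim)\}$ and $\mathcal{E}^S(f)=\{\sim\in\mathcal{E}^W(f):\mathrm{ic}(f/{\sim})=\mathrm{ic}(f)\}$. *)

theory Defs
  imports Main "HOL-Library.Nat_Bijection"
begin

(* Quotient sets X/~ are
   represented by encoding each (finite) class C as the natural number
   set_encode C (a bijection between finite subsets of nat and nat). *)

type_synonym bfun = "nat set \<Rightarrow> int"

(* f \<in> Bool(X): f(\<emptyset>)=0; values outside P(X) are fixed to 0 (canonical extension) *)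
definition bool_fun :: "nat set \<Rightarrow> bfun \<Rightarrow> bool" where
  "bool_fun X f \<longleftrightarrow> f {} = 0 \<and> (\<forall>A. \<not> A \<subseteq> X \<longrightarrow> f A = 0)"

definition one_bool :: bfun where
  "one_bool = (\<lambda>A. 0)"

definition restr :: "bfun \<Rightarrow> nat set \<Rightarrow> bfun" where
  "restr f Y = (\<lambda>A. if A \<subseteq> Y then f A else 0)"

definition star1 :: "nat set \<Rightarrow> nat set \<Rightarrow> bfun \<Rightarrow> bfun \<Rightarrow> bfun" where
  "star1 X Y f g = (\<lambda>A. if A \<subseteq> X \<union> Y then f (A \<inter> X) + g (A \<inter> Y) else 0)"

definition transp :: "nat set \<Rightarrow> (nat \<Rightarrow> nat) \<Rightarrow> bfun \<Rightarrow> bfun" where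
  "transp X \<sigma> f = (\<lambda>A. if A \<subseteq> \<sigma> ` X then f {x \<in> X. \<sigma> x \<in> A} else 0)"

definition transp_rel :: "(nat \<Rightarrow> nat) \<Rightarrow> nat rel \<Rightarrow> nat rel" where
  "transp_rel \<sigma> r = map_prod \<sigma> \<sigma> ` r"

definition indecomposable :: "nat set \<Rightarrow> bfun \<Rightarrow> bool" where
  "indecomposable X f \<longleftrightarrow> X \<noteq> {} \<and>
     (\<forall>Y f' f''. Y \<subseteq> X \<and> bool_fun (X - Y) f' \<and> bool_fun Y f'' \<and> f = star1 (X - Y) Y f' f''
        \<longrightarrow> Y = {} \<or> Y = X)"

definition split_fun :: "nat set \<Rightarrow> nat rel \<Rightarrow> bfun \<Rightarrow> bfun" where
  "split_fun X r f = (\<lambda>A. if A \<subseteq> X then (\<Sum>Y\<in>X // r. f (A \<inter> Y)) else 0)"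

definition varpi :: "nat rel \<Rightarrow> nat \<Rightarrow> nat" where
  "varpi r x = set_encode (r `` {x})"

definition quot_set :: "nat set \<Rightarrow> nat rel \<Rightarrow> nat set" where
  "quot_set X r = set_encode ` (X // r)"

definition quot_fun :: "nat set \<Rightarrow> nat rel \<Rightarrow> bfun \<Rightarrow> bfun" where
  "quot_fun X r f = (\<lambda>A. if A \<subseteq> quot_set X r then f {x \<in> X. varpi r x \<in> A} else 0)"

definition quot_rel :: "nat set \<Rightarrow> nat rel \<Rightarrow> nat rel \<Rightarrow> nat rel" where
  "quot_rel X r r' = {(varpi r x, varpi r y) | x y. x \<in> X \<and> y \<in> X \<and> (x, y) \<in> r'}"

definition indec_equiv :: "nat set \<Rightarrow> bfun \<Rightarrow> nat rel \<Rightarrow> bool" where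
  "indec_equiv X f r \<longleftrightarrow> equiv X r \<and> f = split_fun X r f \<and>
     (\<forall>Y \<in> X // r. indecomposable Y (restr f Y))"

(* \<sim>_f^i (unique by the paper) *)
definition sim_i :: "nat set \<Rightarrow> bfun \<Rightarrow> nat rel" where
  "sim_i X f = (THE r. indec_equiv X f r)"

definition ic :: "nat set \<Rightarrow> bfun \<Rightarrow> nat" where
  "ic X f = card (X // sim_i X f)"

definition cl :: "nat set \<Rightarrow> nat rel \<Rightarrow> nat" where
  "cl X r = card (X // r)"

definition modular :: "nat set \<Rightarrow> bfun \<Rightarrow> bool" where
  "modular X f \<longleftrightarrow> (\<forall>A. A \<subseteq> X \<longrightarrow> f A = (\<Sum>x\<in>A. f {x}))"

definition EW :: "nat set \<Rightarrow> bfun \<Rightarrow> nat rel set" where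
  "EW X f = {r. equiv X r \<and> ic X (split_fun X r f) = cl X r}"

definition ES :: "nat set \<Rightarrow> bfun \<Rightarrow> nat rel set" where
  "ES X f = {r \<in> EW X f. ic (quot_set X r) (quot_fun X r f) = ic X f}"

end

theory Submission
  imports Defs
begin

(* The axioms (Delta) and (epsilon) reduce membership in E(f) to a condition on the classes:
   r \<in> E(f) iff Y \<times> Y \<in> E(f_|Y) for every class Y, and Y \<times> Y \<in> E(g) iff g is
   indecomposable, because g/(Y \<times> Y) lives on a single point and is therefore modular.
   Since ic is additive over the blocks of f | r and equals 1 exactly on indecomposable
   functions, the same condition characterises E^W(f).
   For E(f) \<subseteq> E^S(f): the classes of r \<in> E(f) are indecomposable, so r refines
   s = \<sim>_f^i.  By (delta) the relation induced by s on X/r lies in E(f/r), and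
   (f/r)/(s/r) is a copy of f/s, which is modular; by (epsilon) the induced relation is
   therefore \<sim>_{f/r}^i, and it has as many classes as s. *)

section \<open>Equivalence relations on finite sets\<close>

lemma equiv_Un_disjoint:
  assumes r: "equiv X r" and s: "equiv Y s" and XY: "X \<inter> Y = {}"
  shows "equiv (X \<union> Y) (r \<union> s)"
proof (rule equivI)
  have rX: "r \<subseteq> X \<times> X" and sY: "s \<subseteq> Y \<times> Y" using r s equiv_type by auto
  then show "r \<union> s \<subseteq> (X \<union> Y) \<times> (X \<union> Y)" by blast
  show "refl_on (X \<union> Y) (r \<union> s)" using r s unfolding equiv_def refl_on_def by blast
  show "sym (r \<union> s)" using r s unfolding equiv_def by (simp add: sym_Un)
  have "trans r" "trans s" using r s unfolding equiv_def by auto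
  moreover have "(a, b) \<in> r \<Longrightarrow> (b, c) \<in> s \<Longrightarrow> False" "(a, b) \<in> s \<Longrightarrow> (b, c) \<in> r \<Longrightarrow> False"
    for a b c using rX sY XY by blast+
  ultimately show "trans (r \<union> s)" unfolding trans_def by blast
qed

lemma quotient_Un_disjoint:
  assumes "r \<subseteq> X \<times> X" "s \<subseteq> Y \<times> Y" "X \<inter> Y = {}"
  shows "(X \<union> Y) // (r \<union> s) = X // r \<union> Y // s"
proof -
  have "(r \<union> s) `` {x} = r `` {x}" if "x \<in> X" for x using assms that by blast
  moreover have "(r \<union> s) `` {x} = s `` {x}" if "x \<in> Y" for x using assms that by blast
  ultimately show ?thesis unfolding quotient_def UN_Un by (metis (no_types, lifting) SUP_cong)
qed

lemma quotient_disjoint: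
  assumes "equiv X r" "equiv Y s" "X \<inter> Y = {}"
  shows "X // r \<inter> Y // s = {}"
  using in_quotient_imp_subset[OF assms(1)] in_quotient_imp_subset[OF assms(2)]
    in_quotient_imp_non_empty[OF assms(1)] assms(3) by blast

lemma equiv_full: "equiv X (X \<times> X)"
  by (rule equivI) (auto simp: refl_on_def sym_def trans_def)

lemma quotient_full: "X \<noteq> {} \<Longrightarrow> X // (X \<times> X) = {X}"
  unfolding quotient_def by auto

lemma equiv_restrict: "equiv X r \<Longrightarrow> Z \<subseteq> X \<Longrightarrow> equiv Z (r \<inter> Z \<times> Z)"
  unfolding equiv_def refl_on_def sym_def trans_def by blast

lemma card_quotient_eq_1_iff:
  assumes e: "equiv X r" and ne: "X \<noteq> {}"
  shows "card (X // r) = 1 \<longleftrightarrow> r = X \<times> X"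
proof
  assume "card (X // r) = 1"
  then obtain C where C: "X // r = {C}" by (rule card_1_singletonE)
  then have "C = X" using Union_quotient[OF e] by simp
  then have "X \<in> X // r" using C by simp
  then have "X \<times> X \<subseteq> r" using in_quotient_imp_in_rel[OF e] by fast
  then show "r = X \<times> X" using equiv_type[OF e] by blast
qed (simp add: quotient_full[OF ne])

lemma
  assumes e: "equiv X r" and Y: "Y \<in> X // r"
  shows quotient_remove_class: "(X - Y) // (r \<inter> (X - Y) \<times> (X - Y)) = X // r - {Y}"
    and equiv_eq_Restr_Un_class: "r = r \<inter> (X - Y) \<times> (X - Y) \<union> Y \<times> Y"
proof -
  have r_sym: "(x, z) \<in> r \<Longrightarrow> (z, x) \<in> r" for x z
    using e unfolding equiv_def sym_def by blast
  have closed: "x \<in> Y \<longleftrightarrow> z \<in> Y" if "(x, z) \<in> r" for x z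
    using in_quotient_imp_closed[OF e Y] that r_sym by blast
  have rX: "r \<subseteq> X \<times> X" using equiv_type[OF e] .
  obtain y where y: "Y = r `` {y}" "y \<in> X" using Y by (rule quotientE)
  have class_Y: "r `` {x} = Y" if "x \<in> Y" for x
    using that y equiv_class_eq[OF e] by simp
  have class_rest: "(r \<inter> (X - Y) \<times> (X - Y)) `` {x} = r `` {x}" if "x \<notin> Y" for x
    using closed rX that by blast
  have self: "x \<in> r `` {x}" if "x \<in> X" for x using equiv_class_self[OF e that] .
  show "(X - Y) // (r \<inter> (X - Y) \<times> (X - Y)) = X // r - {Y}"
  proof
    show "(X - Y) // (r \<inter> (X - Y) \<times> (X - Y)) \<subseteq> X // r - {Y}"
    proof
      fix Z assume "Z \<in> (X - Y) // (r \<inter> (X - Y) \<times> (X - Y))"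
      then obtain x where "x \<in> X - Y" "Z = r `` {x}"
        using class_rest by (auto elim!: quotientE)
      then show "Z \<in> X // r - {Y}" using self by (auto intro: quotientI)
    qed
    show "X // r - {Y} \<subseteq> (X - Y) // (r \<inter> (X - Y) \<times> (X - Y))"
    proof
      fix Z assume "Z \<in> X // r - {Y}"
      then obtain x where "x \<in> X" "Z = r `` {x}" "Z \<noteq> Y" by (auto elim!: quotientE)
      then have "x \<in> X - Y" using class_Y by auto
      then show "Z \<in> (X - Y) // (r \<inter> (X - Y) \<times> (X - Y))"
        using class_rest \<open>Z = r `` {x}\<close> by (metis Diff_iff quotientI)
    qed
  qed
  show "r = r \<inter> (X - Y) \<times> (X - Y) \<union> Y \<times> Y"
  proof
    show "r \<subseteq> r \<inter> (X - Y) \<times> (X - Y) \<union> Y \<times> Y"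
      using closed rX by auto
    show "r \<inter> (X - Y) \<times> (X - Y) \<union> Y \<times> Y \<subseteq> r"
      using in_quotient_imp_in_rel[OF e Y] by blast
  qed
qed

lemma finite_equiv_induct [consumes 2, case_names empty remove_class]:
  assumes "finite X" "equiv X r"
    and empty: "P {} {}"
    and remove_class: "\<And>X r Y r'. finite X \<Longrightarrow> equiv X r \<Longrightarrow> Y \<in> X // r \<Longrightarrow>
      equiv (X - Y) r' \<Longrightarrow> (X - Y) // r' = X // r - {Y} \<Longrightarrow> r = r' \<union> Y \<times> Y \<Longrightarrow>
      P (X - Y) r' \<Longrightarrow> P X r"
  shows "P X r"
  using assms(1,2)
proof (induction "card X" arbitrary: X r rule: less_induct)
  case less
  show ?case
  proof (cases "X = {}")
    case True
    then show ?thesis using equiv_type[OF less.prems(2)] empty by simp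
  next
    case False
    then obtain Y where Y: "Y \<in> X // r" by (metis ex_in_conv quotient_is_empty)
    have "Y \<subseteq> X" "Y \<noteq> {}"
      using in_quotient_imp_subset[OF less.prems(2) Y] in_quotient_imp_non_empty[OF less.prems(2) Y] .
    then have "card (X - Y) < card X" using less.prems(1) by (intro psubset_card_mono) auto
    then show ?thesis
      using less Y equiv_restrict[OF less.prems(2), of "X - Y"]
      by (intro remove_class[OF _ _ Y _ quotient_remove_class equiv_eq_Restr_Un_class]) auto
  qed
qed

section \<open>Decomposition into indecomposable factors\<close>

lemma bool_fun_restr: "bool_fun X f \<Longrightarrow> bool_fun Y (restr f Y)"
  unfolding bool_fun_def restr_def by auto

lemma restr_restr: "Z \<subseteq> Y \<Longrightarrow> restr (restr f Y) Z = restr f Z"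
  unfolding restr_def by (intro ext) auto

lemma restr_bool_fun: "bool_fun X f \<Longrightarrow> restr f X = f"
  unfolding bool_fun_def restr_def by auto

lemma bool_fun_star1: "bool_fun X f \<Longrightarrow> bool_fun Y g \<Longrightarrow> bool_fun (X \<union> Y) (star1 X Y f g)"
  unfolding bool_fun_def star1_def by auto

lemma bool_fun_split_fun: "bool_fun X f \<Longrightarrow> bool_fun X (split_fun X r f)"
  unfolding bool_fun_def split_fun_def by auto

lemma star1_commute: "star1 X Y f g = star1 Y X g f"
  unfolding star1_def by (auto simp: Un_commute add.commute)

lemma star1_left: "X \<inter> Y = {} \<Longrightarrow> g {} = 0 \<Longrightarrow> A \<subseteq> X \<Longrightarrow> star1 X Y f g A = f A"
proof -
  assume "X \<inter> Y = {}" "g {} = 0" "A \<subseteq> X"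
  moreover have "A \<inter> X = A" "A \<inter> Y = {}" "A \<subseteq> X \<union> Y" using calculation by blast+
  ultimately show ?thesis unfolding star1_def by simp
qed

lemma star1_right: "X \<inter> Y = {} \<Longrightarrow> f {} = 0 \<Longrightarrow> A \<subseteq> Y \<Longrightarrow> star1 X Y f g A = g A"
  by (metis star1_commute star1_left inf_commute)

lemma split_fun_sum: "f = split_fun X r f \<Longrightarrow> A \<subseteq> X \<Longrightarrow> f A = (\<Sum>Z\<in>X // r. f (A \<inter> Z))"
  by (metis split_fun_def)

lemma split_fun_sum_Int:
  assumes r: "equiv X r" "f = split_fun X r f" and h: "\<And>B. B \<subseteq> X \<Longrightarrow> h B = f B"
  shows "f (A \<inter> X) = (\<Sum>Z\<in>X // r. h (A \<inter> Z))"
proof -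
  have "f (A \<inter> X) = (\<Sum>Z\<in>X // r. f (A \<inter> X \<inter> Z))"
    by (rule split_fun_sum[OF r(2)]) blast
  also have "\<dots> = (\<Sum>Z\<in>X // r. h (A \<inter> Z))"
  proof (rule sum.cong[OF refl])
    fix Z assume "Z \<in> X // r"
    then have "A \<inter> X \<inter> Z = A \<inter> Z" "A \<inter> Z \<subseteq> X"
      using in_quotient_imp_subset[OF r(1)] by blast+
    then show "f (A \<inter> X \<inter> Z) = h (A \<inter> Z)" using h by simp
  qed
  finally show ?thesis .
qed

lemma split_fun_star1:
  assumes XY: "X \<inter> Y = {}" and fin: "finite X" "finite Y"
    and f: "bool_fun X f" and g: "bool_fun Y g"
    and r: "equiv X r" "f = split_fun X r f" and s: "equiv Y s" "g = split_fun Y s g"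
  shows "split_fun (X \<union> Y) (r \<union> s) (star1 X Y f g) = star1 X Y f g"
proof
  fix A
  let ?h = "star1 X Y f g"
  have f0: "f {} = 0" and g0: "g {} = 0" using f g unfolding bool_fun_def by auto
  have "f (A \<inter> X) = (\<Sum>Z\<in>X // r. ?h (A \<inter> Z))"
    by (rule split_fun_sum_Int[OF r]) (rule star1_left[where g = g, OF XY g0])
  moreover have "g (A \<inter> Y) = (\<Sum>Z\<in>Y // s. ?h (A \<inter> Z))"
    by (rule split_fun_sum_Int[OF s]) (rule star1_right[where f = f, OF XY f0])
  ultimately have "?h A = (\<Sum>Z\<in>X // r \<union> Y // s. ?h (A \<inter> Z))" if "A \<subseteq> X \<union> Y"
    using that finite_quotient[OF fin(1) equiv_type[OF r(1)]]
      finite_quotient[OF fin(2) equiv_type[OF s(1)]] quotient_disjoint[OF r(1) s(1) XY]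
    by (simp add: star1_def sum.union_disjoint)
  then show "split_fun (X \<union> Y) (r \<union> s) ?h A = ?h A"
    unfolding split_fun_def quotient_Un_disjoint[OF equiv_type[OF r(1)] equiv_type[OF s(1)] XY]
    by (simp add: star1_def)
qed

lemma indec_equiv_star1:
  assumes XY: "X \<inter> Y = {}" and fin: "finite X" "finite Y"
    and f: "bool_fun X f" and g: "bool_fun Y g"
    and r: "indec_equiv X f r" and s: "indec_equiv Y g s"
  shows "indec_equiv (X \<union> Y) (star1 X Y f g) (r \<union> s)"
proof -
  have er: "equiv X r" and es: "equiv Y s" using r s unfolding indec_equiv_def by auto
  have "f {} = 0" "g {} = 0" using f g unfolding bool_fun_def by auto
  then have "restr (star1 X Y f g) Z = restr f Z" if "Z \<subseteq> X" for Z
    using star1_left[OF XY] that unfolding restr_def by auto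
  moreover have "restr (star1 X Y f g) Z = restr g Z" if "Z \<subseteq> Y" for Z
    using star1_right[OF XY] \<open>f {} = 0\<close> that unfolding restr_def by auto
  ultimately have "indecomposable Z (restr (star1 X Y f g) Z)" if "Z \<in> X // r \<union> Y // s" for Z
    using that r s in_quotient_imp_subset[OF er] in_quotient_imp_subset[OF es]
    unfolding indec_equiv_def by auto
  then show ?thesis
    using split_fun_star1[OF XY fin f g er _ es] r s equiv_Un_disjoint[OF er es XY]
    unfolding indec_equiv_def quotient_Un_disjoint[OF equiv_type[OF er] equiv_type[OF es] XY]
    by auto
qed

lemma indec_equiv_full:
  assumes "indecomposable X f" "bool_fun X f"
  shows "indec_equiv X f (X \<times> X)"
proof -
  have "X \<noteq> {}" using assms(1) unfolding indecomposable_def by blast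
  then show ?thesis
    using assms restr_bool_fun[OF assms(2)] equiv_full
    unfolding indec_equiv_def split_fun_def quotient_full[OF \<open>X \<noteq> {}\<close>] bool_fun_def
    by (auto simp: Int_absorb2)
qed

lemma indec_equiv_exists: "finite X \<Longrightarrow> bool_fun X f \<Longrightarrow> \<exists>r. indec_equiv X f r"
proof (induction "card X" arbitrary: X f rule: less_induct)
  case less
  show ?case
  proof (cases "X = {} \<or> indecomposable X f")
    case True
    moreover have "indec_equiv {} f {}" if "X = {}"
      using less.prems(2) that
      unfolding indec_equiv_def split_fun_def bool_fun_def equiv_def refl_on_def sym_def trans_def
      by auto
    ultimately show ?thesis using indec_equiv_full less.prems(2) by blast
  next
    case False
    then obtain Y f' f'' where Y: "Y \<subseteq> X" "bool_fun (X - Y) f'" "bool_fun Y f''"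
      "f = star1 (X - Y) Y f' f''" "Y \<noteq> {}" "Y \<noteq> X"
      unfolding indecomposable_def by blast
    have "card (X - Y) < card X" "card Y < card X"
      using Y less.prems(1) by (auto intro: psubset_card_mono)
    then obtain r1 r2 where "indec_equiv (X - Y) f' r1" "indec_equiv Y f'' r2"
      using less.hyps Y less.prems(1) by (meson finite_Diff finite_subset)
    then have "indec_equiv ((X - Y) \<union> Y) (star1 (X - Y) Y f' f'') (r1 \<union> r2)"
      using Y less.prems(1) by (intro indec_equiv_star1) (auto intro: finite_subset)
    moreover have "(X - Y) \<union> Y = X" using Y by blast
    ultimately show ?thesis using Y(4) by metis
  qed
qed

lemma split_fun_class:
  assumes f: "bool_fun X f" and fin: "finite X" and s: "equiv X s" "f = split_fun X s f"
    and Z: "Z \<in> X // s" and A: "A \<subseteq> X"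
  shows "f A = f (A \<inter> Z) + f (A - Z)"
proof -
  have fq: "finite (X // s)" using finite_quotient[OF fin equiv_type[OF s(1)]] .
  have disj: "Z' \<inter> Z = {}" if "Z' \<in> X // s - {Z}" for Z'
    using quotient_disj[OF s(1) _ Z] that by blast
  have f0: "f {} = 0" using f unfolding bool_fun_def by simp
  have "f (A - Z) = (\<Sum>Z'\<in>X // s. f ((A - Z) \<inter> Z'))"
    using split_fun_sum[OF s(2), of "A - Z"] A by blast
  also have "\<dots> = f ((A - Z) \<inter> Z) + (\<Sum>Z'\<in>X // s - {Z}. f ((A - Z) \<inter> Z'))"
    by (rule sum.remove[OF fq Z])
  also have "\<dots> = (\<Sum>Z'\<in>X // s - {Z}. f (A \<inter> Z'))"
  proof -
    have "(A - Z) \<inter> Z' = A \<inter> Z'" if "Z' \<in> X // s - {Z}" for Z'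
      using disj[OF that] by blast
    moreover have "(A - Z) \<inter> Z = {}" by blast
    ultimately show ?thesis using f0 by simp
  qed
  finally show ?thesis
    using split_fun_sum[OF s(2) A] sum.remove[OF fq Z] by simp
qed

lemma indecomposable_subset_class:
  assumes f: "bool_fun X f" and fin: "finite X" and s: "equiv X s" "f = split_fun X s f"
    and YX: "Y \<subseteq> X" and ind: "indecomposable Y (restr f Y)"
  shows "\<exists>Z\<in>X // s. Y \<subseteq> Z"
proof -
  obtain y where y: "y \<in> Y" using ind unfolding indecomposable_def by blast
  define Z where "Z = s `` {y}"
  have Z: "Z \<in> X // s" unfolding Z_def using y YX by (auto intro: quotientI)
  define W where "W = Y \<inter> Z"
  have "y \<in> W" unfolding W_def Z_def using y YX equiv_class_self[OF s(1)] by blast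
  have YW: "Y \<union> W = Y" unfolding W_def by blast
  have "restr f Y = star1 (Y - W) W (restr f (Y - W)) (restr f W)"
  proof
    fix A
    show "restr f Y A = star1 (Y - W) W (restr f (Y - W)) (restr f W) A"
    proof (cases "A \<subseteq> Y")
      case True
      then have "A \<inter> (Y - W) = A - Z" "A \<inter> W = A \<inter> Z" unfolding W_def by blast+
      moreover have "star1 (Y - W) W (restr f (Y - W)) (restr f W) A = f (A \<inter> (Y - W)) + f (A \<inter> W)"
        using True unfolding star1_def restr_def by (simp add: YW)
      ultimately show ?thesis
        using split_fun_class[OF f fin s Z, of A] YX True unfolding restr_def by simp
    qed (simp add: restr_def star1_def YW)
  qed
  moreover have "bool_fun (Y - W) (restr f (Y - W))" "bool_fun W (restr f W)"
    using bool_fun_restr[OF f] by blast+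
  moreover have "Y - (Y - W) = W" "W \<subseteq> Y" unfolding W_def by blast+
  ultimately have "W = {} \<or> W = Y"
    using ind unfolding indecomposable_def by metis
  then show ?thesis using \<open>y \<in> W\<close> Z unfolding W_def by blast
qed

lemma indec_equiv_refines:
  assumes f: "bool_fun X f" and fin: "finite X" and r: "equiv X r"
    and ind: "\<forall>Y\<in>X // r. indecomposable Y (restr f Y)" and s: "indec_equiv X f s"
  shows "r \<subseteq> s"
proof
  fix p assume "p \<in> r"
  then obtain x y where p: "p = (x, y)" "(x, y) \<in> r" by (cases p) auto
  then have "x \<in> X" using equiv_type[OF r] by blast
  then have Y: "r `` {x} \<in> X // r" by (rule quotientI)
  have es: "equiv X s" "f = split_fun X s f" using s unfolding indec_equiv_def by auto
  obtain Z where "Z \<in> X // s" "r `` {x} \<subseteq> Z"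
    using indecomposable_subset_class[OF f fin es in_quotient_imp_subset[OF r Y]] ind Y by blast
  moreover have "{x, y} \<subseteq> r `` {x}" using p \<open>x \<in> X\<close> equiv_class_self[OF r] by blast
  ultimately show "p \<in> s" using in_quotient_imp_in_rel[OF es(1)] p by blast
qed

lemma indec_equiv_unique:
  assumes "bool_fun X f" "finite X" "indec_equiv X f r" "indec_equiv X f r'"
  shows "r = r'"
  using assms indec_equiv_refines unfolding indec_equiv_def by (intro subset_antisym) blast+

lemma indec_equiv_sim_i:
  assumes "finite X" "bool_fun X f"
  shows "indec_equiv X f (sim_i X f)"
proof -
  obtain r where r: "indec_equiv X f r" using indec_equiv_exists[OF assms] ..
  show ?thesis
    unfolding sim_i_def by (rule theI[of _ r]) (use r indec_equiv_unique[OF assms(2,1)] in blast)+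
qed

lemma equiv_sim_i: "finite X \<Longrightarrow> bool_fun X f \<Longrightarrow> equiv X (sim_i X f)"
  using indec_equiv_sim_i unfolding indec_equiv_def by blast

lemma sim_i_eqI:
  assumes "finite X" "bool_fun X f" "indec_equiv X f r"
  shows "sim_i X f = r"
  using indec_equiv_unique[OF assms(2,1) indec_equiv_sim_i[OF assms(1,2)] assms(3)] .

lemma sim_i_eq_full_iff:
  assumes "finite X" "X \<noteq> {}" "bool_fun X f"
  shows "sim_i X f = X \<times> X \<longleftrightarrow> indecomposable X f"
proof
  assume "sim_i X f = X \<times> X"
  then have "indec_equiv X f (X \<times> X)" using indec_equiv_sim_i[OF assms(1,3)] by simp
  then show "indecomposable X f"
    unfolding indec_equiv_def quotient_full[OF assms(2)] using restr_bool_fun[OF assms(3)] by simp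
qed (use assms indec_equiv_full sim_i_eqI in blast)

lemma ic_eq_1_iff:
  assumes "finite X" "X \<noteq> {}" "bool_fun X f"
  shows "ic X f = 1 \<longleftrightarrow> indecomposable X f"
  unfolding ic_def card_quotient_eq_1_iff[OF equiv_sim_i[OF assms(1,3)] assms(2)]
  by (rule sim_i_eq_full_iff[OF assms])

lemma ic_pos:
  assumes "finite X" "X \<noteq> {}" "bool_fun X f"
  shows "0 < ic X f"
  unfolding ic_def using assms(2) finite_quotient[OF assms(1) equiv_type[OF equiv_sim_i[OF assms(1,3)]]]
  by (simp add: card_gt_0_iff)

lemma ic_star1:
  assumes XY: "X \<inter> Y = {}" and fin: "finite X" "finite Y" and f: "bool_fun X f" and g: "bool_fun Y g"
  shows "ic (X \<union> Y) (star1 X Y f g) = ic X f + ic Y g"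
proof -
  let ?r = "sim_i X f" and ?s = "sim_i Y g"
  have er: "equiv X ?r" and es: "equiv Y ?s" using equiv_sim_i fin f g by auto
  have "sim_i (X \<union> Y) (star1 X Y f g) = ?r \<union> ?s"
    using fin f g indec_equiv_star1[OF XY fin f g indec_equiv_sim_i indec_equiv_sim_i] bool_fun_star1
    by (intro sim_i_eqI) auto
  moreover have "(X \<union> Y) // (?r \<union> ?s) = X // ?r \<union> Y // ?s"
    using quotient_Un_disjoint[OF equiv_type[OF er] equiv_type[OF es] XY] .
  ultimately show ?thesis
    unfolding ic_def using card_Un_disjoint quotient_disjoint[OF er es XY]
      finite_quotient[OF fin(1) equiv_type[OF er]] finite_quotient[OF fin(2) equiv_type[OF es]]
    by metis
qed

lemma split_fun_remove_class:
  assumes fin: "finite X" and r: "equiv X r" and Y: "Y \<in> X // r"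
    and r': "equiv (X - Y) r'" "(X - Y) // r' = X // r - {Y}"
  shows "split_fun X r f
    = star1 (X - Y) Y (split_fun (X - Y) r' (restr f (X - Y))) (restr f Y)"
proof
  fix A
  have XY: "X \<union> Y = X" using in_quotient_imp_subset[OF r Y] by blast
  have "split_fun (X - Y) r' (restr f (X - Y)) (A \<inter> (X - Y))
      = (\<Sum>Z\<in>(X - Y) // r'. restr f (X - Y) (A \<inter> (X - Y) \<inter> Z))"
    by (simp add: split_fun_def)
  also have "\<dots> = (\<Sum>Z\<in>X // r - {Y}. f (A \<inter> Z))"
  proof -
    have "restr f (X - Y) (A \<inter> (X - Y) \<inter> Z) = f (A \<inter> Z)" if "Z \<in> (X - Y) // r'" for Z
    proof -
      have "A \<inter> (X - Y) \<inter> Z = A \<inter> Z" "A \<inter> Z \<subseteq> X - Y"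
        using in_quotient_imp_subset[OF r'(1) that] by blast+
      then show ?thesis by (simp add: restr_def)
    qed
    then show ?thesis using r'(2) by simp
  qed
  finally have rest: "split_fun (X - Y) r' (restr f (X - Y)) (A \<inter> (X - Y))
      = (\<Sum>Z\<in>X // r - {Y}. f (A \<inter> Z))" .
  show "split_fun X r f A
      = star1 (X - Y) Y (split_fun (X - Y) r' (restr f (X - Y))) (restr f Y) A"
  proof (cases "A \<subseteq> X")
    case True
    then show ?thesis
      using rest sum.remove[OF finite_quotient[OF fin equiv_type[OF r]] Y, of "\<lambda>Z. f (A \<inter> Z)"]
      unfolding split_fun_def star1_def by (simp add: XY restr_def add.commute)
  qed (simp add: split_fun_def star1_def XY)
qed

lemma ic_split_fun:
  "finite X \<Longrightarrow> equiv X r \<Longrightarrow> bool_fun X f \<Longrightarrow>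
    ic X (split_fun X r f) = (\<Sum>Y\<in>X // r. ic Y (restr f Y))"
proof (induction X r arbitrary: f rule: finite_equiv_induct)
  case empty
  then show ?case by (simp add: ic_def)
next
  case (remove_class X r Y r')
  have YX: "Y \<subseteq> X" using in_quotient_imp_subset[OF remove_class(2,3)] .
  have restr_Z: "restr (restr f (X - Y)) Z = restr f Z" if "Z \<in> (X - Y) // r'" for Z
    using restr_restr in_quotient_imp_subset[OF remove_class(4) that] .
  have "ic X (split_fun X r f)
      = ic ((X - Y) \<union> Y) (star1 (X - Y) Y (split_fun (X - Y) r' (restr f (X - Y))) (restr f Y))"
    using split_fun_remove_class[OF remove_class(1-5)] YX by (simp add: Un_absorb2)
  also have "\<dots> = ic (X - Y) (split_fun (X - Y) r' (restr f (X - Y))) + ic Y (restr f Y)"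
    using remove_class.prems YX remove_class(1)
    by (intro ic_star1) (auto intro: bool_fun_split_fun bool_fun_restr finite_subset)
  also have "\<dots> = (\<Sum>Z\<in>X // r - {Y}. ic Z (restr f Z)) + ic Y (restr f Y)"
    using remove_class.IH[OF bool_fun_restr[OF remove_class.prems]] restr_Z remove_class(5)
    by simp
  also have "\<dots> = (\<Sum>Z\<in>X // r. ic Z (restr f Z))"
    using sum.remove[OF finite_quotient[OF remove_class(1) equiv_type[OF remove_class(2)]] remove_class(3),
        of "\<lambda>Z. ic Z (restr f Z)"]
    by (simp add: add.commute)
  finally show ?case .
qed

lemma sum_eq_card_iff:
  fixes a :: "'a \<Rightarrow> nat"
  assumes "finite S" "\<And>y. y \<in> S \<Longrightarrow> 1 \<le> a y"
  shows "sum a S = card S \<longleftrightarrow> (\<forall>y\<in>S. a y = 1)"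
proof
  assume "sum a S = card S"
  then have eq: "sum (\<lambda>_. 1) S = sum a S" by simp
  show "\<forall>y\<in>S. a y = 1"
    using sum_mono_inv[OF eq assms(2) _ assms(1)] by simp
next
  assume "\<forall>y\<in>S. a y = 1"
  then have "sum a S = sum (\<lambda>_. 1) S" by (intro sum.cong) auto
  then show "sum a S = card S" by simp
qed

lemma EW_iff_indecomposable_classes:
  assumes fin: "finite X" and f: "bool_fun X f" and r: "equiv X r"
  shows "r \<in> EW X f \<longleftrightarrow> (\<forall>Y\<in>X // r. indecomposable Y (restr f Y))"
proof -
  have block: "finite Y" "Y \<noteq> {}" "bool_fun Y (restr f Y)" if "Y \<in> X // r" for Y
    using that fin f in_quotient_imp_subset[OF r] in_quotient_imp_non_empty[OF r]
    by (auto intro: finite_subset bool_fun_restr)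
  have "r \<in> EW X f \<longleftrightarrow> (\<Sum>Y\<in>X // r. ic Y (restr f Y)) = card (X // r)"
    unfolding EW_def cl_def using ic_split_fun[OF fin r f] r by simp
  also have "\<dots> \<longleftrightarrow> (\<forall>Y\<in>X // r. ic Y (restr f Y) = 1)"
    using block ic_pos finite_quotient[OF fin equiv_type[OF r]]
    by (intro sum_eq_card_iff) (auto simp: Suc_le_eq)
  also have "\<dots> \<longleftrightarrow> (\<forall>Y\<in>X // r. indecomposable Y (restr f Y))"
    using block ic_eq_1_iff by auto
  finally show ?thesis .
qed

section \<open>Iterated quotients\<close>

lemma quot_set_eq_image: "quot_set X r = varpi r ` X"
  unfolding quot_set_def varpi_def quotient_def by auto

lemma card_quot_set:
  assumes "finite X" "r \<subseteq> X \<times> X"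
  shows "card (quot_set X r) = card (X // r)"
proof -
  have "inj_on set_encode (X // r)"
    by (rule inj_on_subset[OF inj_on_set_encode]) (use finite_equiv_class[OF assms] in blast)
  then show ?thesis unfolding quot_set_def by (rule card_image)
qed

lemma varpi_eq_iff:
  assumes "equiv X r" "finite X" "x \<in> X" "y \<in> X"
  shows "varpi r x = varpi r y \<longleftrightarrow> (x, y) \<in> r"
proof -
  have "finite (r `` {x})" "finite (r `` {y})"
    using equiv_type[OF assms(1)] assms(2) by (auto intro: finite_subset)
  then show ?thesis
    unfolding varpi_def using set_encode_eq eq_equiv_class_iff[OF assms(1,3,4)] by metis
qed

lemma quotient_kernel_on:
  assumes s: "equiv X s" and h: "\<And>x y. x \<in> X \<Longrightarrow> y \<in> X \<Longrightarrow> h x = h y \<longleftrightarrow> (x, y) \<in> s"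
  shows "X // s = (\<lambda>a. {x \<in> X. h x = a}) ` h ` X"
    and "inj_on (\<lambda>a. {x \<in> X. h x = a}) (h ` X)"
proof -
  have "s `` {x} = {y \<in> X. h y = h x}" if x: "x \<in> X" for x
  proof (rule set_eqI)
    fix y
    show "y \<in> s `` {x} \<longleftrightarrow> y \<in> {y \<in> X. h y = h x}"
    proof (cases "y \<in> X")
      case True
      then show ?thesis using h[OF x True] by auto
    qed (use equiv_type[OF s] in auto)
  qed
  then have "X // s = (\<lambda>x. {y \<in> X. h y = h x}) ` X"
    unfolding quotient_def by (auto intro!: image_cong)
  also have "\<dots> = (\<lambda>a. {x \<in> X. h x = a}) ` h ` X" by (simp add: image_image)
  finally show "X // s = (\<lambda>a. {x \<in> X. h x = a}) ` h ` X" .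
  show "inj_on (\<lambda>a. {x \<in> X. h x = a}) (h ` X)"
    by (rule inj_onI) blast
qed

lemma split_fun_kernel_sum:
  assumes f: "bool_fun X f" and fin: "finite X" and s: "equiv X s" "f = split_fun X s f"
    and h: "\<And>x y. x \<in> X \<Longrightarrow> y \<in> X \<Longrightarrow> h x = h y \<longleftrightarrow> (x, y) \<in> s"
    and A: "A \<subseteq> h ` X"
  shows "f {x \<in> X. h x \<in> A} = (\<Sum>a\<in>A. f {x \<in> X. h x = a})"
proof -
  let ?B = "{x \<in> X. h x \<in> A}" and ?fiber = "\<lambda>a. {x \<in> X. h x = a}"
  have f0: "f {} = 0" using f unfolding bool_fun_def by simp
  have classes: "X // s = ?fiber ` h ` X" by (rule quotient_kernel_on(1)[OF s(1) h])
  have "f ?B = (\<Sum>Z\<in>X // s. f (?B \<inter> Z))" by (rule split_fun_sum[OF s(2)]) blast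
  also have "\<dots> = (\<Sum>a\<in>h ` X. f (?B \<inter> ?fiber a))"
    unfolding classes
    using sum.reindex[OF quotient_kernel_on(2)[OF s(1) h], of "\<lambda>Z. f (?B \<inter> Z)"]
    by (simp add: comp_def)
  also have "\<dots> = (\<Sum>a\<in>h ` X. if a \<in> A then f (?fiber a) else 0)"
  proof (rule sum.cong[OF refl])
    fix a
    show "f (?B \<inter> ?fiber a) = (if a \<in> A then f (?fiber a) else 0)"
    proof (cases "a \<in> A")
      case True
      then have "?B \<inter> ?fiber a = ?fiber a" by blast
      then show ?thesis using True by simp
    next
      case False
      then have "?B \<inter> ?fiber a = {}" by blast
      then show ?thesis using False f0 by simp
    qed
  qed
  also have "\<dots> = (\<Sum>a\<in>h ` X \<inter> A. f (?fiber a))"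
    using sum.inter_restrict[of "h ` X" "\<lambda>a. f (?fiber a)" A] fin by simp
  also have "h ` X \<inter> A = A" using A by blast
  finally show ?thesis .
qed

lemma quot_fun_quot_fun:
  assumes "A \<subseteq> quot_set (quot_set X r) q"
  shows "quot_fun (quot_set X r) q (quot_fun X r f) A = f {x \<in> X. varpi q (varpi r x) \<in> A}"
  using assms unfolding quot_fun_def quot_set_eq_image by (auto intro: arg_cong[where f = f])

lemma quot_rel_Image_varpi:
  assumes fin: "finite X" and r: "equiv X r" and s: "equiv X s" and rs: "r \<subseteq> s" and a: "a \<in> X"
  shows "quot_rel X r s `` {varpi r a} = varpi r ` (s `` {a})"
proof
  have trans_s: "(a, b) \<in> s \<Longrightarrow> (b, c) \<in> s \<Longrightarrow> (a, c) \<in> s" for a b c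
    using s unfolding equiv_def trans_def by blast
  show "quot_rel X r s `` {varpi r a} \<subseteq> varpi r ` (s `` {a})"
  proof
    fix c assume "c \<in> quot_rel X r s `` {varpi r a}"
    then have "(varpi r a, c) \<in> quot_rel X r s" by blast
    then obtain a' b where ab: "varpi r a = varpi r a'" "c = varpi r b" "a' \<in> X" "(a', b) \<in> s"
      unfolding quot_rel_def by blast
    from ab(1) have "(a, a') \<in> r" using varpi_eq_iff[OF r fin a ab(3)] by simp
    then have "(a, b) \<in> s" using rs ab(4) trans_s by blast
    then show "c \<in> varpi r ` (s `` {a})" using ab(2) by blast
  qed
  show "varpi r ` (s `` {a}) \<subseteq> quot_rel X r s `` {varpi r a}"
  proof
    fix c assume "c \<in> varpi r ` (s `` {a})"
    then obtain b where b: "(a, b) \<in> s" "c = varpi r b" by blast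
    then have "b \<in> X" using equiv_type[OF s] by blast
    then have "(varpi r a, varpi r b) \<in> quot_rel X r s" unfolding quot_rel_def using a b(1) by blast
    then show "c \<in> quot_rel X r s `` {varpi r a}" using b(2) by simp
  qed
qed

lemma varpi_quot_rel_eq_iff:
  assumes fin: "finite X" and r: "equiv X r" and s: "equiv X s" and rs: "r \<subseteq> s"
    and x: "x \<in> X" and y: "y \<in> X"
  shows "varpi (quot_rel X r s) (varpi r x) = varpi (quot_rel X r s) (varpi r y) \<longleftrightarrow> (x, y) \<in> s"
proof -
  let ?q = "quot_rel X r s"
  have sX: "s \<subseteq> X \<times> X" using equiv_type[OF s] .
  have fin_class: "finite (varpi r ` (s `` {a}))" for a
    using sX by (intro finite_imageI finite_subset[OF _ fin]) blast
  have enc: "varpi ?q (varpi r a) = set_encode (varpi r ` (s `` {a}))" if "a \<in> X" for a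
    by (simp only: varpi_def[of ?q "varpi r a"] quot_rel_Image_varpi[OF fin r s rs that])
  have "varpi ?q (varpi r x) = varpi ?q (varpi r y) \<longleftrightarrow> varpi r ` (s `` {x}) = varpi r ` (s `` {y})"
    unfolding enc[OF x] enc[OF y] by (rule set_encode_eq[OF fin_class fin_class])
  also have "\<dots> \<longleftrightarrow> (x, y) \<in> s"
  proof
    assume eq: "varpi r ` (s `` {x}) = varpi r ` (s `` {y})"
    have "y \<in> s `` {y}" using equiv_class_self[OF s y] .
    then have "varpi r y \<in> varpi r ` (s `` {x})" unfolding eq by (rule imageI)
    then obtain b where b: "(x, b) \<in> s" "varpi r y = varpi r b" by blast
    have "b \<in> X" using b(1) sX by blast
    then have "(b, y) \<in> r" using iffD1[OF varpi_eq_iff[OF r fin, of b y] b(2)[symmetric]] y by blast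
    then show "(x, y) \<in> s" using b(1) rs s unfolding equiv_def trans_def by blast
  next
    assume "(x, y) \<in> s"
    then show "varpi r ` (s `` {x}) = varpi r ` (s `` {y})" using equiv_class_eq[OF s] by simp
  qed
  finally show ?thesis .
qed

lemma
  assumes fin: "finite X" and f: "bool_fun X f" and r: "equiv X r"
    and s: "equiv X s" "f = split_fun X s f" and rs: "r \<subseteq> s"
  shows modular_quot_fun_quot_rel:
      "modular (quot_set (quot_set X r) (quot_rel X r s))
        (quot_fun (quot_set X r) (quot_rel X r s) (quot_fun X r f))"
    and card_quotient_quot_rel: "card (quot_set X r // quot_rel X r s) = card (X // s)"
proof -
  let ?Q = "quot_set X r" and ?q = "quot_rel X r s" and ?g = "quot_fun X r f"
  define h where "h x = varpi ?q (varpi r x)" for x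
  have h: "h x = h y \<longleftrightarrow> (x, y) \<in> s" if "x \<in> X" "y \<in> X" for x y
    unfolding h_def using varpi_quot_rel_eq_iff[OF fin r s(1) rs that] .
  have QQ: "quot_set ?Q ?q = h ` X" unfolding quot_set_eq_image h_def by (simp add: image_image)
  have g: "quot_fun ?Q ?q ?g A = f {x \<in> X. h x \<in> A}" if "A \<subseteq> quot_set ?Q ?q" for A
    unfolding h_def using quot_fun_quot_fun[OF that] .
  show "modular (quot_set ?Q ?q) (quot_fun ?Q ?q ?g)"
    unfolding modular_def
  proof (intro allI impI)
    fix A assume A: "A \<subseteq> quot_set ?Q ?q"
    have "quot_fun ?Q ?q ?g A = (\<Sum>a\<in>A. f {x \<in> X. h x = a})"
      unfolding g[OF A] using split_fun_kernel_sum[OF f fin s h] A QQ by simp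
    also have "\<dots> = (\<Sum>a\<in>A. quot_fun ?Q ?q ?g {a})"
      using g A by (intro sum.cong) auto
    finally show "quot_fun ?Q ?q ?g A = (\<Sum>a\<in>A. quot_fun ?Q ?q ?g {a})" .
  qed
  have "?q \<subseteq> ?Q \<times> ?Q" unfolding quot_rel_def quot_set_eq_image by blast
  then have "card (?Q // ?q) = card (h ` X)"
    using card_quot_set[of ?Q ?q] fin QQ by (simp add: quot_set_eq_image)
  also have "\<dots> = card (X // s)"
    using quotient_kernel_on(1)[OF s(1) h] card_image[OF quotient_kernel_on(2)[OF s(1) h]] by simp
  finally show "card (?Q // ?q) = card (X // s)" .
qed

section \<open>Consequences of the axioms\<close>

lemma bool_fun_quot_fun: "bool_fun X f \<Longrightarrow> bool_fun (quot_set X r) (quot_fun X r f)"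
  unfolding bool_fun_def quot_fun_def by simp

lemma modular_singleton: "bool_fun {a} g \<Longrightarrow> modular {a} g"
  unfolding modular_def bool_fun_def by (auto simp: subset_singleton_iff)

lemma quot_set_full: "X \<noteq> {} \<Longrightarrow> quot_set X (X \<times> X) = {set_encode X}"
  unfolding quot_set_def quotient_full by simp

locale equiv_system =
  fixes Bt :: "nat set \<Rightarrow> bfun \<Rightarrow> bool"
    and E :: "nat set \<Rightarrow> bfun \<Rightarrow> nat rel set"
  assumes Bt_sub: "\<And>X f. finite X \<Longrightarrow> Bt X f \<Longrightarrow> bool_fun X f"
    and Bt_restr: "\<And>X Y f. finite X \<Longrightarrow> Y \<subseteq> X \<Longrightarrow> Bt X f \<Longrightarrow> Bt Y (restr f Y)"
    and E_equiv: "\<And>X f r. finite X \<Longrightarrow> Bt X f \<Longrightarrow> r \<in> E X f \<Longrightarrow> equiv X r"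
    and E_quot: "\<And>X f r. finite X \<Longrightarrow> Bt X f \<Longrightarrow> r \<in> E X f \<Longrightarrow> Bt (quot_set X r) (quot_fun X r f)"
    and delta: "\<And>X f r r'. finite X \<Longrightarrow> Bt X f \<Longrightarrow> equiv X r \<Longrightarrow> equiv X r' \<Longrightarrow> r \<subseteq> r' \<Longrightarrow>
                  (r \<in> E X f \<and> quot_rel X r r' \<in> E (quot_set X r) (quot_fun X r f))
                  \<longleftrightarrow> (r' \<in> E X f \<and> r \<in> E X (split_fun X r' f))"
    and Delta: "\<And>X Y f rX rY. finite X \<Longrightarrow> finite Y \<Longrightarrow> X \<inter> Y = {} \<Longrightarrow> Bt (X \<union> Y) f
                  \<Longrightarrow> equiv X rX \<Longrightarrow> equiv Y rY \<Longrightarrow>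
                  (rX \<union> rY \<in> E (X \<union> Y) f \<longleftrightarrow> rX \<in> E X (restr f X) \<and> rY \<in> E Y (restr f Y))"
    and eps_id: "\<And>X f. finite X \<Longrightarrow> Bt X f \<Longrightarrow> Id_on X \<in> E X f"
    and eps_i: "\<And>X f. finite X \<Longrightarrow> Bt X f \<Longrightarrow> sim_i X f \<in> E X f"
    and eps_quot: "\<And>X f r. finite X \<Longrightarrow> Bt X f \<Longrightarrow> r \<in> E X f \<Longrightarrow>
                      modular (quot_set X r) (quot_fun X r f) \<longleftrightarrow> r = sim_i X f"
begin

lemma E_iff_full_on_classes:
  "finite X \<Longrightarrow> equiv X r \<Longrightarrow> Bt X f \<Longrightarrow>
    r \<in> E X f \<longleftrightarrow> (\<forall>Y\<in>X // r. Y \<times> Y \<in> E Y (restr f Y))"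
proof (induction X r arbitrary: f rule: finite_equiv_induct)
  case empty
  then show ?case using eps_id[of "{}" f] by simp
next
  case (remove_class X r Y r')
  have YX: "Y \<subseteq> X" using in_quotient_imp_subset[OF remove_class(2,3)] .
  have XY: "(X - Y) \<union> Y = X" using YX by blast
  have fin: "finite (X - Y)" "finite Y" using remove_class(1) finite_subset[OF YX] by auto
  have restr_Z: "restr (restr f (X - Y)) Z = restr f Z" if "Z \<in> (X - Y) // r'" for Z
    using restr_restr in_quotient_imp_subset[OF remove_class(4) that] .
  have IH: "r' \<in> E (X - Y) (restr f (X - Y)) \<longleftrightarrow> (\<forall>Z\<in>X // r - {Y}. Z \<times> Z \<in> E Z (restr f Z))"
    unfolding remove_class.IH[OF Bt_restr[OF remove_class(1) Diff_subset remove_class.prems]]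
      remove_class(5)[symmetric]
    using restr_Z by (intro ball_cong) simp_all
  have "r \<in> E X f \<longleftrightarrow> r' \<union> Y \<times> Y \<in> E ((X - Y) \<union> Y) f"
    using remove_class(6) XY by simp
  also have "\<dots> \<longleftrightarrow> r' \<in> E (X - Y) (restr f (X - Y)) \<and> Y \<times> Y \<in> E Y (restr f Y)"
    using remove_class.prems XY by (intro Delta[OF fin _ _ remove_class(4) equiv_full]) auto
  also have "\<dots> \<longleftrightarrow> (\<forall>Z\<in>X // r - {Y}. Z \<times> Z \<in> E Z (restr f Z)) \<and> Y \<times> Y \<in> E Y (restr f Y)"
    using IH by simp
  also have "\<dots> \<longleftrightarrow> (\<forall>Z\<in>X // r. Z \<times> Z \<in> E Z (restr f Z))"
    using remove_class(3) by blast
  finally show ?case .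
qed

lemma full_in_E_iff_indecomposable:
  assumes fin: "finite Y" and ne: "Y \<noteq> {}" and g: "Bt Y g"
  shows "Y \<times> Y \<in> E Y g \<longleftrightarrow> indecomposable Y g"
proof
  assume full: "Y \<times> Y \<in> E Y g"
  have "modular (quot_set Y (Y \<times> Y)) (quot_fun Y (Y \<times> Y) g)"
    using bool_fun_quot_fun[OF Bt_sub[OF fin g], of "Y \<times> Y"] unfolding quot_set_full[OF ne]
    by (rule modular_singleton)
  then have "sim_i Y g = Y \<times> Y" using eps_quot[OF fin g full] by simp
  then show "indecomposable Y g" using sim_i_eq_full_iff[OF fin ne Bt_sub[OF fin g]] by simp
next
  assume "indecomposable Y g"
  then have "sim_i Y g = Y \<times> Y" using sim_i_eq_full_iff[OF fin ne Bt_sub[OF fin g]] by simp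
  then show "Y \<times> Y \<in> E Y g" using eps_i[OF fin g] by simp
qed

lemma E_iff_indecomposable_classes:
  assumes fin: "finite X" and f: "Bt X f" and r: "equiv X r"
  shows "r \<in> E X f \<longleftrightarrow> (\<forall>Y\<in>X // r. indecomposable Y (restr f Y))"
  unfolding E_iff_full_on_classes[OF fin r f]
proof (intro ball_cong refl)
  fix Y assume Y: "Y \<in> X // r"
  then have "Y \<subseteq> X" "Y \<noteq> {}"
    using in_quotient_imp_subset[OF r] in_quotient_imp_non_empty[OF r] by auto
  then show "Y \<times> Y \<in> E Y (restr f Y) \<longleftrightarrow> indecomposable Y (restr f Y)"
    using full_in_E_iff_indecomposable finite_subset[OF _ fin] Bt_restr[OF fin _ f] by blast
qed

lemma E_eq_EW:
  assumes fin: "finite X" and f: "Bt X f"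
  shows "E X f = EW X f"
proof (intro set_eqI)
  fix r
  show "r \<in> E X f \<longleftrightarrow> r \<in> EW X f"
  proof (cases "equiv X r")
    case True
    then show ?thesis
      using E_iff_indecomposable_classes[OF fin f] EW_iff_indecomposable_classes[OF fin Bt_sub[OF fin f]]
      by simp
  qed (use E_equiv[OF fin f] in \<open>auto simp: EW_def\<close>)
qed

lemma E_subset_ES:
  assumes fin: "finite X" and f: "Bt X f"
  shows "E X f \<subseteq> ES X f"
proof
  fix r assume rE: "r \<in> E X f"
  have bf: "bool_fun X f" using Bt_sub[OF fin f] .
  have r: "equiv X r" using E_equiv[OF fin f rE] .
  define s where "s = sim_i X f"
  have s: "equiv X s" "f = split_fun X s f"
    using indec_equiv_sim_i[OF fin bf] unfolding s_def indec_equiv_def by auto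
  have rs: "r \<subseteq> s"
    using indec_equiv_refines[OF bf fin r _ indec_equiv_sim_i[OF fin bf]]
      E_iff_indecomposable_classes[OF fin f r] rE
    unfolding s_def by blast
  have "s \<in> E X f" unfolding s_def using eps_i[OF fin f] .
  then have "quot_rel X r s \<in> E (quot_set X r) (quot_fun X r f)"
    using delta[OF fin f r s(1) rs] rE s(2) by simp
  then have "quot_rel X r s = sim_i (quot_set X r) (quot_fun X r f)"
    using eps_quot[OF _ E_quot[OF fin f rE]] modular_quot_fun_quot_rel[OF fin bf r s rs] fin
    by (simp add: quot_set_eq_image)
  then have "ic (quot_set X r) (quot_fun X r f) = ic X f"
    unfolding ic_def using card_quotient_quot_rel[OF fin bf r s rs] s_def by simp
  then show "r \<in> ES X f" unfolding ES_def using E_eq_EW[OF fin f] rE by simp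
qed

end

theorem proposition3p19:
  fixes Bt :: "nat set \<Rightarrow> bfun \<Rightarrow> bool"
    and E :: "nat set \<Rightarrow> bfun \<Rightarrow> nat rel set"
  assumes Bt_sub: "\<And>X f. finite X \<Longrightarrow> Bt X f \<Longrightarrow> bool_fun X f"
    and Bt_bij: "\<And>X X' \<sigma> f. finite X \<Longrightarrow> bij_betw \<sigma> X X' \<Longrightarrow> Bt X f \<Longrightarrow> Bt X' (transp X \<sigma> f)"
    and Bt_one: "Bt {} one_bool"
    and Bt_star: "\<And>X Y f g. finite X \<Longrightarrow> finite Y \<Longrightarrow> X \<inter> Y = {} \<Longrightarrow> Bt X f \<Longrightarrow> Bt Y g
                    \<Longrightarrow> Bt (X \<union> Y) (star1 X Y f g)"
    and Bt_restr: "\<And>X Y f. finite X \<Longrightarrow> Y \<subseteq> X \<Longrightarrow> Bt X f \<Longrightarrow> Bt Y (restr f Y)"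
    and E_equiv: "\<And>X f r. finite X \<Longrightarrow> Bt X f \<Longrightarrow> r \<in> E X f \<Longrightarrow> equiv X r"
    and E_bij: "\<And>X X' \<sigma> f. finite X \<Longrightarrow> bij_betw \<sigma> X X' \<Longrightarrow> Bt X f
                   \<Longrightarrow> E X' (transp X \<sigma> f) = transp_rel \<sigma> ` E X f"
    and E_quot: "\<And>X f r. finite X \<Longrightarrow> Bt X f \<Longrightarrow> r \<in> E X f \<Longrightarrow> Bt (quot_set X r) (quot_fun X r f)"
    and star_one: "{} \<in> E {} one_bool"
    and star_E: "\<And>X Y f g. finite X \<Longrightarrow> finite Y \<Longrightarrow> X \<inter> Y = {} \<Longrightarrow> Bt X f \<Longrightarrow> Bt Y g
                   \<Longrightarrow> E (X \<union> Y) (star1 X Y f g) = {rX \<union> rY | rX rY. rX \<in> E X f \<and> rY \<in> E Y g}"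
    and delta: "\<And>X f r r'. finite X \<Longrightarrow> Bt X f \<Longrightarrow> equiv X r \<Longrightarrow> equiv X r' \<Longrightarrow> r \<subseteq> r' \<Longrightarrow>
                  (r \<in> E X f \<and> quot_rel X r r' \<in> E (quot_set X r) (quot_fun X r f))
                  \<longleftrightarrow> (r' \<in> E X f \<and> r \<in> E X (split_fun X r' f))"
    and Delta: "\<And>X Y f rX rY. finite X \<Longrightarrow> finite Y \<Longrightarrow> X \<inter> Y = {} \<Longrightarrow> Bt (X \<union> Y) f
                  \<Longrightarrow> equiv X rX \<Longrightarrow> equiv Y rY \<Longrightarrow>
                  (rX \<union> rY \<in> E (X \<union> Y) f \<longleftrightarrow> rX \<in> E X (restr f X) \<and> rY \<in> E Y (restr f Y))"
    and eps_id: "\<And>X f. finite X \<Longrightarrow> Bt X f \<Longrightarrow> Id_on X \<in> E X f"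
    and eps_i: "\<And>X f. finite X \<Longrightarrow> Bt X f \<Longrightarrow> sim_i X f \<in> E X f"
    and eps_split: "\<And>X f r. finite X \<Longrightarrow> Bt X f \<Longrightarrow> r \<in> E X f \<Longrightarrow>
                      modular X (split_fun X r f) \<longleftrightarrow> r = Id_on X"
    and eps_quot: "\<And>X f r. finite X \<Longrightarrow> Bt X f \<Longrightarrow> r \<in> E X f \<Longrightarrow>
                      modular (quot_set X r) (quot_fun X r f) \<longleftrightarrow> r = sim_i X f"
  shows "\<forall>X f. finite X \<longrightarrow> Bt X f \<longrightarrow> E X f = ES X f \<and> ES X f = EW X f"
proof -
  interpret equiv_system Bt E
    by (rule equiv_system.intro) (fact Bt_sub Bt_restr E_equiv E_quot delta Delta eps_id eps_i eps_quot)+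
  have "ES X f \<subseteq> EW X f" for X f unfolding ES_def by blast
  then show ?thesis using E_eq_EW E_subset_ES by blast
qed

end
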